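(* Let $E(\boldsymbol x,\boldsymbol\theta)$, $\boldsymbol x\in\mathbb{R}^d$, $\boldsymbol\theta\in\mathbb{R}^n$, be an energy function with Boltzmann distribution $p_\mathrm{m}(\boldsymbol x,\boldsymbol\theta)=e^{-\beta E(\boldsymbol x,\boldsymbol\theta)}/Z(\boldsymbol\theta)$, $\beta>0$. Let $p_\mathrm{s}$ be the distribution of a system obeying the overdamped Langevin equation $\dot{\boldsymbol x}=-\mu\nabla_{\boldsymbol x}E(\boldsymbol x,\boldsymbol\theta(t))+\boldsymbol\xi$, initialized in equilibrium ($p_\mathrm{s}(\cdot,0)=p_\mathrm{m}(\cdot,\boldsymbol\theta(0))$). Let the parameters be driven slowly for a time $\tau$ according to $$\dot{\boldsymbol\theta}=-\boldsymbol\eta\,\nabla_{\boldsymbol\theta}\mathcal{L}_\mathrm{approx},\qquad \nabla_{\boldsymbol\theta}\mathcal{L}_\mathrm{approx}=\langle\nabla_{\boldsymbol\theta}E\rangle_{p_\mathrm{d}}-\langle\nabla_{\boldsymbol\theta}E\rangle_{p_\mathrm{s}},$$ such that for all $t\in[0,\tau)$ the slow-driving approximation holds in the form $$\nabla_{\boldsymbol\theta}\mathcal{L}_\mathrm{bias}=\langle\nabla_{\boldsymbol\theta}E\rangle_{p_\mathrm{s}}-\langle\nabla_{\boldsymbol\theta}E\rangle_{p_\mathrm{m}}=\boldsymbol\zeta(\boldsymbol\theta)\,\dot{\boldsymbol\theta},$$ where $\boldsymbol\zeta=\beta^{-1}(\boldsymbol\tau^\mathrm{r}\odot\boldsymbol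 g)$ is the thermodynamic metric. If the (matrix) learning rate follows the schedule $$\boldsymbol\eta^{-1}(\boldsymbol\theta,t)=\beta^{-1}\big(\tau-t+\boldsymbol\tau^\mathrm{r}(\boldsymbol\theta)\big)\odot\boldsymbol g(\boldsymbol\theta),$$ then for $t\in[0,\tau)$ $$\dot{\boldsymbol\theta}=-\frac{\beta}{\tau-t}\,\boldsymbol g^{-1}\,\nabla_{\boldsymbol\theta}\mathcal{L}_\mathrm{MLE},\qquad \nabla_{\boldsymbol\theta}\mathcal{L}_\mathrm{MLE}=\langle\nabla_{\boldsymbol\theta}E\rangle_{p_\mathrm{d}}-\langle\nabla_{\boldsymbol\theta}E\rangle_{p_\mathrm{m}},$$ which is a natural gradient flow.
   Context: $\langle f\rangle_p$ denotes expectation under density $p$; $p_\mathrm{d}$ is a fixed data distribution; $\mu>0$ is the mobility and $\boldsymbol\xi$ is white noise with mean zero and variance $2\mu\beta^{-1}$. $\mathcal{L}_\mathrm{MLE}=\langle-\beta^{-1}\log p_\mathrm{m}\rangle_{p_\mathrm{d}}$ is the (scaled) negative log-likelihood and $\mathcal{L}_\mathrm{bias}=\mathcal{L}_\mathrm{MLE}-\mathcal{L}_\mathrm{approx}$. $\boldsymbol g$ is the Fisher metric, $g_{ij}=\langle(\partial_{\theta_i}\log p_\mathrm{m})(\partial_{\theta_j}\log p_\mathrm{m})\rangle_{p_\mathrm{m}}$, assumed positive definite; $\boldsymbol\tau^\mathrm{r}(\boldsymbol\theta)$ is the $n\times n$ matrix of integral relaxation times (characteristic correlation times of the forces $\nabla_{\boldsymbol\theta}\log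 p_\mathrm{m}$), chosen so that $\boldsymbol\zeta$ is symmetric positive definite. $\odot$ is the Hadamard (entrywise) product, and in $\tau-t+\boldsymbol\tau^\mathrm{r}$ the scalar $\tau-t$ is added to every entry of $\boldsymbol\tau^\mathrm{r}$. *)

theory Defs
  imports "HOL-Analysis.Analysis"
begin

definition pderiv_at :: "(real^'k \<Rightarrow> real) \<Rightarrow> 'k \<Rightarrow> real^'k \<Rightarrow> real" where
  "pderiv_at f i y = deriv (\<lambda>s. f (y + s *\<^sub>R axis i 1)) 0"

definition grad :: "(real^'k \<Rightarrow> real) \<Rightarrow> real^'k \<Rightarrow> real^'k" where
  "grad f y = (\<chi> i. pderiv_at f i y)"

definition divergence :: "(real^'k \<Rightarrow> real^'k) \<Rightarrow> real^'k \<Rightarrow> real" where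
  "divergence F y = (\<Sum>i\<in>UNIV. pderiv_at (\<lambda>z. F z $ i) i y)"

definition grad_theta :: "(real^'d \<Rightarrow> real^'n \<Rightarrow> real) \<Rightarrow> real^'d \<Rightarrow> real^'n \<Rightarrow> real^'n" where
  "grad_theta E x th = grad (E x) th"

definition expect :: "(real^'d \<Rightarrow> real) \<Rightarrow> (real^'d \<Rightarrow> real^'n) \<Rightarrow> real^'n" where
  "expect p f = (\<chi> i. integral UNIV (\<lambda>x. p x * f x $ i))"

definition partition_fn :: "real \<Rightarrow> (real^'d \<Rightarrow> real^'n \<Rightarrow> real) \<Rightarrow> real^'n \<Rightarrow> real" where
  "partition_fn \<beta> E th = integral UNIV (\<lambda>x. exp (- \<beta> * E x th))"

definition boltzmann :: "real \<Rightarrow> (real^'d \<Rightarrow> real^'n \<Rightarrow> real) \<Rightarrow> real^'d \<Rightarrow> real^'n \<Rightarrow> real" where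
  "boltzmann \<beta> E x th = exp (- \<beta> * E x th) / partition_fn \<beta> E th"

definition fisher :: "real \<Rightarrow> (real^'d \<Rightarrow> real^'n \<Rightarrow> real) \<Rightarrow> real^'n \<Rightarrow> real^'n^'n" where
  "fisher \<beta> E th = (\<chi> i j. integral UNIV (\<lambda>x. boltzmann \<beta> E x th *
      (grad_theta (\<lambda>y t. ln (boltzmann \<beta> E y t)) x th $ i) *
      (grad_theta (\<lambda>y t. ln (boltzmann \<beta> E y t)) x th $ j)))"

definition pos_def :: "real^'n^'n \<Rightarrow> bool" where
  "pos_def A \<longleftrightarrow> transpose A = A \<and> (\<forall>v. v \<noteq> 0 \<longrightarrow> v \<bullet> (A *v v) > 0)"

definition hadamard :: "real^'n^'m \<Rightarrow> real^'n^'m \<Rightarrow> real^'n^'m" where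
  "hadamard A B = (\<chi> i j. A $ i $ j * B $ i $ j)"

definition thermo_metric :: "real \<Rightarrow> real^'n^'n \<Rightarrow> real^'n^'n \<Rightarrow> real^'n^'n" where
  "thermo_metric \<beta> taur g = (1 / \<beta>) *\<^sub>R hadamard taur g"

text \<open>Fokker--Planck equation (density form of the overdamped Langevin equation
  dx/dt = -mu grad_x E(x,theta(t)) + xi, noise variance 2 mu / beta) on (0,tau).\<close>
definition fokker_planck ::
  "real \<Rightarrow> real \<Rightarrow> (real^'d \<Rightarrow> real^'n \<Rightarrow> real) \<Rightarrow> (real \<Rightarrow> real^'n) \<Rightarrow> real
     \<Rightarrow> (real^'d \<Rightarrow> real \<Rightarrow> real) \<Rightarrow> bool" where
  "fokker_planck \<mu> \<beta> E \<theta> \<tau> ps \<longleftrightarrow>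
     (\<forall>t\<in>{0<..<\<tau>}. \<forall>x. ((\<lambda>s. ps x s) has_real_derivative
        (\<mu> * divergence (\<lambda>y. ps y t *\<^sub>R grad (\<lambda>z. E z (\<theta> t)) y) x
         + (\<mu> / \<beta>) * divergence (grad (\<lambda>y. ps y t)) x)) (at t))"

end

theory Submission
  imports Defs
begin

text \<open>Write \<open>H\<close> for the inverse learning rate \<open>\<eta>\<^sup>-\<^sup>1\<close>. The schedule splits it as
  \<open>H = ((\<tau> - t)/\<beta>) g + \<zeta>\<close>. Applying \<open>H\<close> to the learning rule gives
  \<open>H \<theta>' = \<langle>\<nabla>E\<rangle>\<^sub>p\<^sub>s - \<langle>\<nabla>E\<rangle>\<^sub>p\<^sub>d\<close>, and by slow driving the \<open>\<zeta>\<close>-part \<open>\<zeta> \<theta>'\<close> is exactly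
  \<open>\<langle>\<nabla>E\<rangle>\<^sub>p\<^sub>s - \<langle>\<nabla>E\<rangle>\<^sub>p\<^sub>m\<close>. The sampling distribution \<open>p\<^sub>s\<close> therefore drops out, leaving
  \<open>((\<tau> - t)/\<beta>) g \<theta>' = - \<nabla>L\<^sub>M\<^sub>L\<^sub>E\<close>, which is solved by inverting the Fisher metric.\<close>

lemma matrix_inv_left:
  fixes A :: "'a::semiring_1^'n^'n"
  assumes "invertible A"
  shows "matrix_inv A ** A = mat 1"
  using someI_ex[OF assms[unfolded invertible_def]] unfolding matrix_inv_def by blast

lemma pos_def_invertible:
  fixes A :: "real^'n^'n"
  assumes "pos_def A"
  shows "invertible A"
proof -
  have "A *v x = 0 \<Longrightarrow> x = 0" for x
    using assms unfolding pos_def_def by (metis inner_zero_right less_irrefl)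
  then show ?thesis
    using invertible_left_inverse matrix_left_invertible_ker by blast
qed

lemma matrix_vector_mult_uminus_right:
  fixes A :: "'a::ring_1^'n^'m"
  shows "A *v (- x) = - (A *v x)"
  by (simp add: matrix_vector_mult_def vec_eq_iff sum_negf)

lemma hadamard_const_plus:
  fixes T G :: "real^'n^'m"
  shows "hadamard (\<chi> i j. s + T $ i $ j) G = s *\<^sub>R G + hadamard T G"
  by (simp add: hadamard_def vec_eq_iff algebra_simps)

lemma scaled_hadamard_const_plus_eq_thermo_metric:
  "(1 / \<beta>) *\<^sub>R hadamard (\<chi> i j. s + T $ i $ j) G = (s / \<beta>) *\<^sub>R G + thermo_metric \<beta> T G"
  by (simp add: hadamard_const_plus thermo_metric_def scaleR_add_right)

lemma inverse_split_cancels_bias: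
  fixes H G Z :: "real^'n^'n"
  assumes "invertible H"
    and "matrix_inv H = c *\<^sub>R G + Z"
    and "v = - (H *v (a - b))"
    and "b - b\<^sub>0 = Z *v v"
  shows "c *\<^sub>R (G *v v) = b\<^sub>0 - a"
proof -
  have "matrix_inv H *v v = b - a"
    using assms(3) matrix_inv_left[OF assms(1)]
    by (simp add: matrix_vector_mul_assoc matrix_vector_mult_uminus_right)
  then have "c *\<^sub>R (G *v v) + Z *v v = b - a"
    by (simp add: assms(2) algebra_simps scaleR_matrix_vector_assoc)
  with assms(4) show ?thesis
    by (simp add: algebra_simps)
qed

lemma scaled_matrix_vector_eq_solve:
  fixes G :: "real^'n^'n"
  assumes "invertible G" and "c \<noteq> 0" and "c *\<^sub>R (G *v v) = w"
  shows "v = (1 / c) *\<^sub>R (matrix_inv G *v w)"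
proof -
  have "matrix_inv G *v w = c *\<^sub>R v"
    using matrix_inv_left[OF assms(1)]
    by (simp flip: assms(3) add: matrix_vector_mult_scaleR matrix_vector_mul_assoc)
  with assms(2) show ?thesis
    by simp
qed

theorem theorem1:
  fixes E :: "real^'d \<Rightarrow> real^'n \<Rightarrow> real"
    and \<beta> \<mu> \<tau> :: real
    and pd :: "real^'d \<Rightarrow> real"
    and ps :: "real^'d \<Rightarrow> real \<Rightarrow> real"
    and \<theta> \<theta>' :: "real \<Rightarrow> real^'n"
    and \<eta> :: "real^'n \<Rightarrow> real \<Rightarrow> real^'n^'n"
    and taur :: "real^'n \<Rightarrow> real^'n^'n"
  assumes beta_pos: "\<beta> > 0" and mu_pos: "\<mu> > 0" and tau_pos: "\<tau> > 0"
    and g_pd: "\<And>th. pos_def (fisher \<beta> E th)"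
    and zeta_pd: "\<And>th. pos_def (thermo_metric \<beta> (taur th) (fisher \<beta> E th))"
    and langevin: "fokker_planck \<mu> \<beta> E \<theta> \<tau> ps"
    and init_eq: "\<And>x. ps x 0 = boltzmann \<beta> E x (\<theta> 0)"
    and deriv_theta: "\<And>t. t \<in> {0..<\<tau>} \<Longrightarrow> (\<theta> has_vector_derivative \<theta>' t) (at t within {0..<\<tau>})"
    and learning: "\<And>t. t \<in> {0..<\<tau>} \<Longrightarrow>
        \<theta>' t = - (\<eta> (\<theta> t) t *v
          (expect pd (\<lambda>x. grad_theta E x (\<theta> t)) - expect (\<lambda>x. ps x t) (\<lambda>x. grad_theta E x (\<theta> t))))"
    and slow_driving: "\<And>t. t \<in> {0..<\<tau>} \<Longrightarrow>
        expect (\<lambda>x. ps x t) (\<lambda>x. grad_theta E x (\<theta> t))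
          - expect (\<lambda>x. boltzmann \<beta> E x (\<theta> t)) (\<lambda>x. grad_theta E x (\<theta> t))
        = thermo_metric \<beta> (taur (\<theta> t)) (fisher \<beta> E (\<theta> t)) *v \<theta>' t"
    and eta_inv: "\<And>th t. t \<in> {0..<\<tau>} \<Longrightarrow> invertible (\<eta> th t)"
    and schedule: "\<And>th t. t \<in> {0..<\<tau>} \<Longrightarrow>
        matrix_inv (\<eta> th t) = (1 / \<beta>) *\<^sub>R hadamard (\<chi> i j. \<tau> - t + taur th $ i $ j) (fisher \<beta> E th)"
  shows "\<forall>t\<in>{0..<\<tau>}. \<theta>' t = - (\<beta> / (\<tau> - t)) *\<^sub>R (matrix_inv (fisher \<beta> E (\<theta> t)) *v
          (expect pd (\<lambda>x. grad_theta E x (\<theta> t)) - expect (\<lambda>x. boltzmann \<beta> E x (\<theta> t)) (\<lambda>x. grad_theta E x (\<theta> t))))"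
proof
  fix t assume t: "t \<in> {0..<\<tau>}"
  let ?g = "fisher \<beta> E (\<theta> t)"
  let ?grad_mle = "expect pd (\<lambda>x. grad_theta E x (\<theta> t))
    - expect (\<lambda>x. boltzmann \<beta> E x (\<theta> t)) (\<lambda>x. grad_theta E x (\<theta> t))"
  have "matrix_inv (\<eta> (\<theta> t) t) = ((\<tau> - t) / \<beta>) *\<^sub>R ?g + thermo_metric \<beta> (taur (\<theta> t)) ?g"
    using schedule[OF t] by (simp add: scaled_hadamard_const_plus_eq_thermo_metric)
  from inverse_split_cancels_bias[OF eta_inv[OF t] this learning[OF t] slow_driving[OF t]]
  have "((\<tau> - t) / \<beta>) *\<^sub>R (?g *v \<theta>' t) = - ?grad_mle"
    by simp
  moreover have "(\<tau> - t) / \<beta> \<noteq> 0"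
    using t beta_pos by simp
  ultimately have "\<theta>' t = (1 / ((\<tau> - t) / \<beta>)) *\<^sub>R (matrix_inv ?g *v - ?grad_mle)"
    by (intro scaled_matrix_vector_eq_solve pos_def_invertible g_pd)
  then show "\<theta>' t = - (\<beta> / (\<tau> - t)) *\<^sub>R (matrix_inv ?g *v ?grad_mle)"
    by (simp add: matrix_vector_mult_uminus_right del: minus_diff_eq)
qed

end
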